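(* Let $d\ge 2$, let $\bm{k}_1,\ldots,\bm{k}_d\in\mathbb{R}^d$ be a basis of $\mathbb{R}^d$ with $\mathsf{K}=[\bm{k}_1,\ldots,\bm{k}_d]$, let $\mathsf{A}=[\bm{a}_1,\ldots,\bm{a}_d]=2\pi\mathsf{K}^{-T}$, and let $\mathfrak{a},\mathfrak{b}\in\mathbb{R}$. For $\bm{u}=[\alpha_1,\ldots,\alpha_d,\beta_1,\ldots,\beta_d]^T\in\mathbb{C}^{2d}$ and $\bm{x}\in\mathbb{R}^d$ let $p(\bm{x};\bm{u})=\sum_{j=1}^d\alpha_j e^{i\bm{k}_j\cdot\bm{x}}+\beta_j e^{-i\bm{k}_j\cdot\bm{x}}$, $\psi(\bm{x};\bm{u})=\mathfrak{a}|p(\bm{x};\bm{u})|^2-\mathfrak{b}|\nabla_{\bm{x}}p(\bm{x};\bm{u})|^2$, and let $\mathsf{Q}(\bm{0})$ be the Hermitian matrix with $\psi(\bm{0};\bm{u})=\bm{u}^*\mathsf{Q}(\bm{0})\bm{u}$. Let $\bm{u}=[\bm{v};\pm\bm{v}]$ (with $\bm{v}\in\mathbb{R}^d$ and a fixed choice of sign) be a real unit-norm eigenvector of $\mathsf{Q}(\bm{0})$ with eigenvalue $\lambda$, and let $Z=\{j: v_j=0\}$. If $Z\neq\emptyset$, then $$\{\bm{k}_j: j\notin Z\}^\perp=\operatorname{span}\{\bm{a}_j: j\in Z\}\subset L_{\lambda,\bm{u}},$$ where $L_{\lambda,\bm{u}}=\{\bm{x}\in\mathbb{R}^d:\psi(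\bm{x};\bm{u})=\lambda\}$.
   Context: $[\bm{v};\pm\bm{v}]$ denotes the vector of $\mathbb{R}^{2d}$ obtained by stacking $\bm{v}$ on top of $\pm\bm{v}$. $S^\perp$ denotes the orthogonal complement in $\mathbb{R}^d$ of the set $S$. *)

theory Defs
  imports "HOL-Analysis.Analysis"
begin

text \<open>Vectors u in C^{2d} are indexed by 'n + 'n: u $ Inl j = alpha_j, u $ Inr j = beta_j.
  The wave vectors k_j are the columns of K.\<close>

definition pfun :: "real^'n^'n \<Rightarrow> real^'n \<Rightarrow> complex^('n + 'n) \<Rightarrow> complex" where
  "pfun K x u = (\<Sum>j\<in>UNIV. u $ Inl j * exp (\<i> * of_real (column j K \<bullet> x))
                          + u $ Inr j * exp (- (\<i> * of_real (column j K \<bullet> x))))"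

definition grad_norm_sq :: "(real^'n \<Rightarrow> complex) \<Rightarrow> real^'n \<Rightarrow> real" where
  "grad_norm_sq f x = (\<Sum>l\<in>UNIV. (cmod (frechet_derivative f (at x) (axis l 1)))\<^sup>2)"

definition psi :: "real^'n^'n \<Rightarrow> real \<Rightarrow> real \<Rightarrow> real^'n \<Rightarrow> complex^('n + 'n) \<Rightarrow> real" where
  "psi K a b x u = a * (cmod (pfun K x u))\<^sup>2 - b * grad_norm_sq (\<lambda>y. pfun K y u) x"

definition cmat_hermitian :: "complex^'m^'m \<Rightarrow> bool" where
  "cmat_hermitian Q \<longleftrightarrow> (\<forall>i j. Q $ i $ j = cnj (Q $ j $ i))"

definition quad_form :: "complex^'m^'m \<Rightarrow> complex^'m \<Rightarrow> complex" where
  "quad_form Q u = (\<Sum>i\<in>UNIV. cnj (u $ i) * (Q *v u) $ i)"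

definition Amat :: "real^'n^'n \<Rightarrow> real^'n^'n" where
  "Amat K = (2 * pi) *\<^sub>R transpose (matrix_inv K)"

end

theory Submission
  imports Defs
begin

text \<open>Since \<open>k\<^sub>i \<bullet> a\<^sub>j = 2\<pi> \<delta>\<^sub>i\<^sub>j\<close>, the \<open>a\<^sub>j\<close> form the basis dual to the \<open>k\<^sub>j\<close>,
  which gives the equality of the two subspaces. Translating by \<open>x\<close> multiplies \<open>\<alpha>\<^sub>j\<close> and
  \<open>\<beta>\<^sub>j\<close> by the phases \<open>exp (\<plusminus>i k\<^sub>j \<bullet> x)\<close>, so \<open>\<psi>(x; u) = \<psi>(0; T\<^sub>x u)\<close> with
  \<open>T\<^sub>x u = phase_shift K x u\<close>. If \<open>x\<close> is orthogonal to every \<open>k\<^sub>j\<close> with \<open>v\<^sub>j \<noteq> 0\<close>, every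
  phase that meets a nonzero coefficient is \<open>1\<close>, hence \<open>T\<^sub>x u = u\<close> and
  \<open>\<psi>(x; u) = \<psi>(0; u) = u\<^sup>* Q(0) u = \<lambda> |u|\<^sup>2 = \<lambda>\<close>.\<close>

lemma matrix_inv_inverse:
  fixes A :: "'a::semiring_1^'n^'m"
  assumes "invertible A"
  shows "A ** matrix_inv A = mat 1" and "matrix_inv A ** A = mat 1"
  using someI_ex[OF assms[unfolded invertible_def]] unfolding matrix_inv_def by auto

lemma inner_column_Amat:
  assumes "invertible K"
  shows "column i K \<bullet> column j (Amat K) = (if i = j then 2 * pi else 0)"
proof -
  have "column i K \<bullet> column j (Amat K) = 2 * pi * (matrix_inv K ** K) $ j $ i"
    unfolding Amat_def column_def inner_vec_def transpose_def matrix_matrix_mult_def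
    by (simp add: sum_distrib_left mult_ac)
  then show ?thesis
    by (simp add: matrix_inv_inverse[OF assms] mat_def)
qed

lemma Amat_expansion:
  assumes "invertible K"
  shows "(\<Sum>j\<in>UNIV. ((column j K \<bullet> x) / (2 * pi)) *\<^sub>R column j (Amat K)) = x"
proof -
  have "Amat K *v (transpose K *v x) = ((2 * pi) *\<^sub>R transpose (matrix_inv K) ** transpose K) *v x"
    by (simp add: Amat_def matrix_vector_mul_assoc del: transpose_matrix_vector)
  also have "\<dots> = (2 * pi) *\<^sub>R (transpose (K ** matrix_inv K) *v x)"
    by (simp only: scalar_matrix_assoc[symmetric] scaleR_matrix_vector_assoc[symmetric]
        matrix_transpose_mul)
  also have "\<dots> = (2 * pi) *\<^sub>R x"
    by (simp add: matrix_inv_inverse[OF assms])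
  finally have Amat_K: "Amat K *v (transpose K *v x) = (2 * pi) *\<^sub>R x" .
  have col: "(transpose K *v x) $ j = column j K \<bullet> x" for j
    by (simp add: matrix_vector_mult_def transpose_def column_def inner_vec_def mult.commute
        del: transpose_matrix_vector)
  have "x = inverse (2 * pi) *\<^sub>R (Amat K *v (transpose K *v x))"
    unfolding Amat_K by simp
  also have "\<dots> = inverse (2 * pi) *\<^sub>R (\<Sum>j\<in>UNIV. (column j K \<bullet> x) *\<^sub>R column j (Amat K))"
    by (simp only: matrix_mult_sum[of "Amat K"] col scalar_mult_eq_scaleR)
  also have "\<dots> = (\<Sum>j\<in>UNIV. ((column j K \<bullet> x) / (2 * pi)) *\<^sub>R column j (Amat K))"
    by (simp only: scaleR_sum_right scaleR_scaleR divide_inverse_commute)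
  finally show ?thesis ..
qed

lemma orthogonal_comp_columns_eq_span_Amat:
  assumes "invertible K"
  shows "orthogonal_comp {column j K | j. j \<notin> J} = span {column j (Amat K) | j. j \<in> J}"
proof
  show "orthogonal_comp {column j K | j. j \<notin> J} \<subseteq> span {column j (Amat K) | j. j \<in> J}"
  proof
    fix x assume "x \<in> orthogonal_comp {column j K | j. j \<notin> J}"
    then have orth: "column j K \<bullet> x = 0" if "j \<notin> J" for j
      using that unfolding orthogonal_comp_def orthogonal_def by blast
    have "x = (\<Sum>j\<in>UNIV. ((column j K \<bullet> x) / (2 * pi)) *\<^sub>R column j (Amat K))"
      by (rule Amat_expansion[OF assms, symmetric])
    also have "\<dots> = (\<Sum>j\<in>J. ((column j K \<bullet> x) / (2 * pi)) *\<^sub>R column j (Amat K))"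
      by (rule sum.mono_neutral_right) (auto simp: orth)
    also have "\<dots> \<in> span {column j (Amat K) | j. j \<in> J}"
      by (intro span_sum span_mul span_base) auto
    finally show "x \<in> span {column j (Amat K) | j. j \<in> J}" .
  qed
  show "span {column j (Amat K) | j. j \<in> J} \<subseteq> orthogonal_comp {column j K | j. j \<notin> J}"
    by (rule span_minimal[OF _ subspace_orthogonal_comp])
      (auto simp: orthogonal_comp_def orthogonal_def inner_column_Amat[OF assms])
qed

lemma has_derivative_exp_complex[derivative_intros]:
  "(g has_derivative g') (at x) \<Longrightarrow>
    ((\<lambda>x. exp (g x :: complex)) has_derivative (\<lambda>h. exp (g x) * g' h)) (at x)"
  using has_derivative_compose[of g g' x UNIV exp "(*) (exp (g x))"]
    DERIV_exp[of "g x", unfolded has_field_derivative_def]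
  by simp

lemma pfun_differentiable: "(\<lambda>y. pfun K y u) differentiable at x"
  unfolding pfun_def by (rule differentiableI, (rule derivative_intros)+)

definition phase_shift :: "real^'n^'n \<Rightarrow> real^'n \<Rightarrow> complex^('n + 'n) \<Rightarrow> complex^('n + 'n)" where
  "phase_shift K x u = (\<chi> i. case i of
      Inl j \<Rightarrow> u $ Inl j * exp (\<i> * of_real (column j K \<bullet> x))
    | Inr j \<Rightarrow> u $ Inr j * exp (- (\<i> * of_real (column j K \<bullet> x))))"

lemma pfun_add:
  fixes K :: "real^'n^'n"
  shows "pfun K (x + y) u = pfun K y (phase_shift K x u)"
proof -
  have "exp (\<i> * of_real (k \<bullet> (x + y))) = exp (\<i> * of_real (k \<bullet> x)) * exp (\<i> * of_real (k \<bullet> y))"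
    and "exp (- (\<i> * of_real (k \<bullet> (x + y)))) =
      exp (- (\<i> * of_real (k \<bullet> x))) * exp (- (\<i> * of_real (k \<bullet> y)))" for k :: "real^'n"
    by (simp_all add: inner_add_right distrib_left exp_add[symmetric])
  then show ?thesis
    unfolding pfun_def phase_shift_def by (simp add: mult.assoc)
qed

lemma phase_shift_eq_self:
  assumes "\<And>j. column j K \<bullet> x \<noteq> 0 \<Longrightarrow> u $ Inl j = 0 \<and> u $ Inr j = 0"
  shows "phase_shift K x u = u"
proof -
  have "u $ Inl j * exp (\<i> * of_real (column j K \<bullet> x)) = u $ Inl j"
    and "u $ Inr j * exp (- (\<i> * of_real (column j K \<bullet> x))) = u $ Inr j" for j
    using assms[of j] by (cases "column j K \<bullet> x = 0"; simp)+
  then show ?thesis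
    unfolding phase_shift_def vec_eq_iff by (simp split: sum.split)
qed

lemma grad_norm_sq_shift:
  assumes "f differentiable at x"
  shows "grad_norm_sq (\<lambda>y. f (x + y)) 0 = grad_norm_sq f x"
proof -
  obtain D where D: "(f has_derivative D) (at x)"
    using assms unfolding differentiable_def by blast
  have "((\<lambda>y. f (x + y)) has_derivative D) (at 0)"
    using has_derivative_compose[OF shift_has_derivative_id[of x], of f D] D by simp
  then show ?thesis
    unfolding grad_norm_sq_def using frechet_derivative_at D by metis
qed

lemma psi_shift: "psi K a b x u = psi K a b 0 (phase_shift K x u)"
proof -
  have "(\<lambda>y. pfun K y (phase_shift K x u)) = (\<lambda>y. pfun K (x + y) u)"
    by (simp add: pfun_add)
  then show ?thesis
    unfolding psi_def
    using pfun_add[of K x 0 u]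
      grad_norm_sq_shift[OF pfun_differentiable[where K = K and u = u and x = x]]
    by simp
qed

lemma quad_form_eigenvector:
  assumes "Q *v u = lam *s u"
  shows "quad_form Q u = lam * of_real ((norm u)\<^sup>2)"
proof -
  have "quad_form Q u = lam * (\<Sum>i\<in>UNIV. cnj (u $ i) * u $ i)"
    unfolding quad_form_def assms by (simp add: sum_distrib_left mult_ac)
  also have "(\<Sum>i\<in>UNIV. cnj (u $ i) * u $ i) = of_real (\<Sum>i\<in>UNIV. (norm (u $ i))\<^sup>2)"
    unfolding of_real_sum by (simp only: complex_norm_square mult.commute)
  also have "(\<Sum>i\<in>UNIV. (norm (u $ i))\<^sup>2) = (norm u)\<^sup>2"
    unfolding norm_vec_def L2_set_def by (simp add: sum_nonneg)
  finally show ?thesis .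
qed

theorem lemma2p4:
  fixes K :: "real^'n^'n" and a b :: real
    and Q :: "complex^('n + 'n)^('n + 'n)"
    and v :: "real^'n" and s :: real and lam :: complex
  assumes d2: "CARD('n) \<ge> 2"
    and basis: "invertible K"
    and herm: "cmat_hermitian Q"
    and Qdef: "\<forall>u. complex_of_real (psi K a b 0 u) = quad_form Q u"
    and sgn: "s = 1 \<or> s = -1"
    and udef: "u = (\<chi> i. case i of Inl j \<Rightarrow> complex_of_real (v $ j)
                                  | Inr j \<Rightarrow> complex_of_real (s * v $ j))"
    and unit: "norm u = 1"
    and eig: "Q *v u = lam *s u"
    and Zdef: "Z = {j. v $ j = 0}"
    and Zne: "Z \<noteq> {}"
  shows "orthogonal_comp {column j K | j. j \<notin> Z} = span {column j (Amat K) | j. j \<in> Z}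
       \<and> span {column j (Amat K) | j. j \<in> Z}
            \<subseteq> {x. complex_of_real (psi K a b x u) = lam}"
proof -
  note span_eq = orthogonal_comp_columns_eq_span_Amat[OF basis, of Z]
  have psi_0: "complex_of_real (psi K a b 0 u) = lam"
    using Qdef quad_form_eigenvector[OF eig] unit by simp
  have "complex_of_real (psi K a b x u) = lam"
    if x: "x \<in> span {column j (Amat K) | j. j \<in> Z}" for x
  proof -
    have "column j K \<bullet> x = 0" if "j \<notin> Z" for j
      using x that unfolding span_eq[symmetric] orthogonal_comp_def orthogonal_def by blast
    then have "phase_shift K x u = u"
      by (intro phase_shift_eq_self) (auto simp: udef Zdef)
    then show ?thesis
      using psi_0 by (simp add: psi_shift[of K a b x u])
  qed
  with span_eq show ?thesis by blast
qed

end
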